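(* Let $X$ be an $S^{\ast}$-well-filtered space and $Y$ a retract of $X$, i.e. there are continuous maps $f:X\to Y$ and $g:Y\to X$ with $f\circ g=\mathrm{id}_Y$. Then $Y$ is $S^{\ast}$-well-filtered. In particular, if a product $\prod_{i\in I}X_i$ of $T_0$-spaces is $S^{\ast}$-well-filtered, then each $X_i$ is $S^{\ast}$-well-filtered.
   Context: All spaces are $T_0$. The specialization order of $X$ is given by $x\le y$ iff $x\in cl(\{y\})$; ${\uparrow}$ is taken with respect to it; a subset is saturated if it is an upper set in the specialization order. $K(X)$ denotes the set of all nonempty compact saturated subsets of $X$; a family in $K(X)$ is filtered if any two members contain a common member. $X$ is $S^{\ast}$-well-filtered if for every filtered family $\{K_i\mid i\in I\}\subseteq K(X)$, every $G\in K(X)$ and every nonempty open $U$, $\bigcap_{i\in I}K_i\cap G\subseteq U$ implies $K_i\cap G\subseteq U$ for some $i$. *)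

theory Defs
  imports "HOL-Analysis.Analysis"
begin

definition spec_le :: "'a topology \<Rightarrow> 'a \<Rightarrow> 'a \<Rightarrow> bool" where
  "spec_le X x y \<longleftrightarrow> x \<in> topspace X \<and> y \<in> topspace X \<and> x \<in> X closure_of {y}"

definition saturated_in :: "'a topology \<Rightarrow> 'a set \<Rightarrow> bool" where
  "saturated_in X A \<longleftrightarrow> A \<subseteq> topspace X \<and>
     (\<forall>x\<in>A. \<forall>y\<in>topspace X. spec_le X x y \<longrightarrow> y \<in> A)"

definition KX :: "'a topology \<Rightarrow> 'a set set" where
  "KX X = {K. K \<noteq> {} \<and> compactin X K \<and> saturated_in X K}"

definition filtered_K :: "'a topology \<Rightarrow> 'a set set \<Rightarrow> bool" where
  "filtered_K X \<K> \<longleftrightarrow> \<K> \<noteq> {} \<and> \<K> \<subseteq> KX X \<and>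
     (\<forall>K1\<in>\<K>. \<forall>K2\<in>\<K>. \<exists>K3\<in>\<K>. K3 \<subseteq> K1 \<inter> K2)"

definition S_star_well_filtered :: "'a topology \<Rightarrow> bool" where
  "S_star_well_filtered X \<longleftrightarrow>
     (\<forall>\<K> G U. filtered_K X \<K> \<and> G \<in> KX X \<and> openin X U \<and> U \<noteq> {} \<and>
        \<Inter>\<K> \<inter> G \<subseteq> U \<longrightarrow> (\<exists>K\<in>\<K>. K \<inter> G \<subseteq> U))"

end

theory Submission
  imports Defs
begin

text \<open>
  Let \<open>r : X \<rightarrow> Y\<close> be a retraction with section \<open>s\<close>. A filtered family \<open>\<K>\<close> in \<open>K(Y)\<close>, a set
  \<open>G \<in> K(Y)\<close> and an open \<open>U\<close> are transported to the saturations \<open>\<up>s(K)\<close>, \<open>\<up>s(G)\<close> and to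
  \<open>r\<^sup>-\<^sup>1(U)\<close> in \<open>X\<close>. Because \<open>r\<close> is monotone for the specialization order and every
  \<open>K \<in> K(Y)\<close> is saturated, \<open>r\<close> maps \<open>\<up>s(K)\<close> back into \<open>K\<close>; hence
  \<open>\<Inter>\<up>s(\<K>) \<inter> \<up>s(G) \<subseteq> r\<^sup>-\<^sup>1(U)\<close>. \<open>S\<^sup>*\<close>-well-filteredness of \<open>X\<close> yields \<open>K \<in> \<K>\<close> with
  \<open>\<up>s(K) \<inter> \<up>s(G) \<subseteq> r\<^sup>-\<^sup>1(U)\<close>, and evaluating at \<open>s(y)\<close> for \<open>y \<in> K \<inter> G\<close> gives
  \<open>K \<inter> G \<subseteq> U\<close>. Each factor of a nonempty product is a retract of it via the projection.
\<close>

lemma spec_le_refl: "x \<in> topspace X \<Longrightarrow> spec_le X x x"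
  unfolding spec_le_def using closure_of_subset[of "{x}" X] by auto

lemma spec_le_trans:
  assumes "spec_le X x y" "spec_le X y z"
  shows "spec_le X x z"
proof -
  have "X closure_of {y} \<subseteq> X closure_of {z}"
    using assms(2) unfolding spec_le_def
    by (metis closure_of_minimal closedin_closure_of empty_subsetI insert_subset)
  then show ?thesis
    using assms unfolding spec_le_def by auto
qed

lemma openin_spec_le_upward:
  assumes "openin X V" "x \<in> V" "spec_le X x y"
  shows "y \<in> V"
  using assms unfolding spec_le_def in_closure_of by auto

lemma continuous_map_spec_le:
  assumes f: "continuous_map X Y f" and le: "spec_le X x y"
  shows "spec_le Y (f x) (f y)"
proof -
  have "f x \<in> f ` (X closure_of {y})"
    using le unfolding spec_le_def by blast
  then have "f x \<in> Y closure_of {f y}"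
    using continuous_map_image_closure_subset[OF f, of "{y}"] by auto
  moreover have "f x \<in> topspace Y" "f y \<in> topspace Y"
    using f le unfolding spec_le_def continuous_map_def by blast+
  ultimately show ?thesis
    unfolding spec_le_def by blast
qed

definition saturation :: "'a topology \<Rightarrow> 'a set \<Rightarrow> 'a set" where
  "saturation X A = {y \<in> topspace X. \<exists>a\<in>A. spec_le X a y}"

lemma saturation_subset_topspace: "saturation X A \<subseteq> topspace X"
  unfolding saturation_def by auto

lemma saturation_superset: "A \<subseteq> topspace X \<Longrightarrow> A \<subseteq> saturation X A"
  unfolding saturation_def by (auto intro: spec_le_refl)

lemma saturation_mono: "A \<subseteq> B \<Longrightarrow> saturation X A \<subseteq> saturation X B"
  unfolding saturation_def by blast

lemma saturated_in_saturation: "saturated_in X (saturation X A)"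
  unfolding saturated_in_def
proof (intro conjI ballI impI)
  fix x y
  assume "x \<in> saturation X A" "y \<in> topspace X" "spec_le X x y"
  moreover obtain a where "a \<in> A" "spec_le X a x"
    using \<open>x \<in> saturation X A\<close> unfolding saturation_def by blast
  ultimately show "y \<in> saturation X A"
    unfolding saturation_def using spec_le_trans[of X a x y] by blast
qed (rule saturation_subset_topspace)

lemma compactin_saturation:
  assumes A: "compactin X A"
  shows "compactin X (saturation X A)"
  unfolding compactin_def
proof (intro conjI allI impI)
  show "saturation X A \<subseteq> topspace X"
    by (rule saturation_subset_topspace)
  fix \<U>
  assume \<U>: "(\<forall>U\<in>\<U>. openin X U) \<and> saturation X A \<subseteq> \<Union>\<U>"
  have "A \<subseteq> saturation X A"
    using saturation_superset[OF compactin_subset_topspace[OF A]] .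
  with \<U> have "A \<subseteq> \<Union>\<U>"
    by blast
  with \<U> A obtain \<F> where \<F>: "finite \<F>" "\<F> \<subseteq> \<U>" "A \<subseteq> \<Union>\<F>"
    unfolding compactin_def by blast
  have "saturation X A \<subseteq> \<Union>\<F>"
  proof
    fix y
    assume "y \<in> saturation X A"
    then obtain a where a: "a \<in> A" "spec_le X a y"
      unfolding saturation_def by blast
    then obtain V where V: "V \<in> \<F>" "a \<in> V"
      using \<F>(3) by blast
    then have "openin X V"
      using \<U> \<F>(2) by blast
    then have "y \<in> V"
      using V(2) a(2) by (rule openin_spec_le_upward)
    with V(1) show "y \<in> \<Union>\<F>"
      by blast
  qed
  with \<F> show "\<exists>\<F>. finite \<F> \<and> \<F> \<subseteq> \<U> \<and> saturation X A \<subseteq> \<Union>\<F>"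
    by blast
qed

lemma KX_subset_topspace: "K \<in> KX X \<Longrightarrow> K \<subseteq> topspace X"
  unfolding KX_def saturated_in_def by blast

lemma saturation_image_in_KX:
  assumes K: "K \<in> KX Y" and g: "continuous_map Y X g"
  shows "saturation X (g ` K) \<in> KX X"
proof -
  have "compactin Y K" "K \<noteq> {}"
    using K by (auto simp: KX_def)
  then have gK: "compactin X (g ` K)" "g ` K \<noteq> {}"
    using image_compactin[OF _ g] by auto
  have "g ` K \<subseteq> saturation X (g ` K)"
    using saturation_superset[OF compactin_subset_topspace[OF gK(1)]] .
  with gK show ?thesis
    unfolding KX_def using compactin_saturation saturated_in_saturation by blast
qed

lemma filtered_K_saturation_image:
  assumes \<K>: "filtered_K Y \<K>" and g: "continuous_map Y X g"
  shows "filtered_K X ((\<lambda>K. saturation X (g ` K)) ` \<K>)"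
  unfolding filtered_K_def
proof (intro conjI ballI)
  let ?h = "\<lambda>K. saturation X (g ` K)"
  show "?h ` \<K> \<noteq> {}"
    using \<K> by (auto simp: filtered_K_def)
  show "?h ` \<K> \<subseteq> KX X"
    using \<K> saturation_image_in_KX[OF _ g] by (auto simp: filtered_K_def)
  fix L1 L2
  assume "L1 \<in> ?h ` \<K>" "L2 \<in> ?h ` \<K>"
  then obtain K1 K2 where K12: "K1 \<in> \<K>" "K2 \<in> \<K>" and L12: "L1 = ?h K1" "L2 = ?h K2"
    by blast
  obtain K3 where K3: "K3 \<in> \<K>" "K3 \<subseteq> K1" "K3 \<subseteq> K2"
    using \<K> K12 unfolding filtered_K_def by (meson le_inf_iff)
  then have "?h K3 \<subseteq> L1 \<inter> L2"
    unfolding L12 by (simp add: image_mono saturation_mono)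
  with K3(1) show "\<exists>L3\<in>?h ` \<K>. L3 \<subseteq> L1 \<inter> L2"
    by blast
qed

lemma retraction_maps_saturation_image_subset:
  assumes rs: "retraction_maps X Y r s" and K: "saturated_in Y K"
  shows "r ` saturation X (s ` K) \<subseteq> K"
proof
  fix y
  assume "y \<in> r ` saturation X (s ` K)"
  then obtain x k where x: "y = r x" and k: "k \<in> K" "spec_le X (s k) x"
    unfolding saturation_def by auto
  have "k \<in> topspace Y"
    using K k unfolding saturated_in_def by blast
  then have "spec_le Y k y"
    using continuous_map_spec_le[of X Y r, OF _ k(2)] rs x
    unfolding retraction_maps_def by simp
  with K k show "y \<in> K"
    unfolding saturated_in_def spec_le_def by blast
qed

lemma retraction_maps_Inter_saturation_subset_preimage:
  assumes rs: "retraction_maps X Y r s"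
    and sat: "\<forall>K\<in>\<K>. saturated_in Y K" "saturated_in Y G" and cover: "\<Inter>\<K> \<inter> G \<subseteq> U"
  shows "\<Inter>((\<lambda>K. saturation X (s ` K)) ` \<K>) \<inter> saturation X (s ` G) \<subseteq> {x \<in> topspace X. r x \<in> U}"
proof
  fix x
  assume x: "x \<in> \<Inter>((\<lambda>K. saturation X (s ` K)) ` \<K>) \<inter> saturation X (s ` G)"
  then have xG: "x \<in> saturation X (s ` G)"
    by blast
  have "r x \<in> K" if "K \<in> \<K>" for K
  proof -
    have "x \<in> saturation X (s ` K)"
      using x that by blast
    then show ?thesis
      using retraction_maps_saturation_image_subset[OF rs, of K] sat(1) that by blast
  qed
  then have "r x \<in> \<Inter>\<K>"
    by blast
  moreover have "r x \<in> G"
    using xG retraction_maps_saturation_image_subset[OF rs sat(2)] by blast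
  moreover have "x \<in> topspace X"
    using xG saturation_subset_topspace[of X "s ` G"] by blast
  ultimately show "x \<in> {x \<in> topspace X. r x \<in> U}"
    using cover by blast
qed

lemma retraction_maps_Int_subset_of_saturation:
  assumes rs: "retraction_maps X Y r s" and KG: "K \<subseteq> topspace Y" "G \<subseteq> topspace Y"
    and sub: "saturation X (s ` K) \<inter> saturation X (s ` G) \<subseteq> {x \<in> topspace X. r x \<in> U}"
  shows "K \<inter> G \<subseteq> U"
proof
  fix y
  assume y: "y \<in> K \<inter> G"
  have s: "continuous_map Y X s" and rs_y: "r (s y) = y"
    using rs y KG unfolding retraction_maps_def by auto
  then have "s ` K \<subseteq> topspace X" "s ` G \<subseteq> topspace X"
    using KG continuous_map_image_subset_topspace[OF s] by blast+
  then have "s y \<in> saturation X (s ` K) \<inter> saturation X (s ` G)"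
    using y saturation_superset[of "s ` K" X] saturation_superset[of "s ` G" X] by blast
  with sub rs_y show "y \<in> U"
    by force
qed

lemma S_star_well_filtered_retraction_maps_image:
  assumes X: "S_star_well_filtered X" and rs: "retraction_maps X Y r s"
  shows "S_star_well_filtered Y"
  unfolding S_star_well_filtered_def
proof (intro allI impI)
  fix \<K> G U
  assume "filtered_K Y \<K> \<and> G \<in> KX Y \<and> openin Y U \<and> U \<noteq> {} \<and> \<Inter>\<K> \<inter> G \<subseteq> U"
  then have \<K>: "filtered_K Y \<K>" and G: "G \<in> KX Y" and U: "openin Y U" "U \<noteq> {}"
    and cover: "\<Inter>\<K> \<inter> G \<subseteq> U"
    by auto
  have r: "continuous_map X Y r" and s: "continuous_map Y X s"
    using rs unfolding retraction_maps_def by auto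
  have \<K>_KX: "K \<in> KX Y" if "K \<in> \<K>" for K
    using \<K> that unfolding filtered_K_def by blast
  have sat_\<K>: "\<forall>K\<in>\<K>. saturated_in Y K" and sat_G: "saturated_in Y G"
    using \<K>_KX G unfolding KX_def by blast+
  define sat where "sat = (\<lambda>K. saturation X (s ` K))"
  define V where "V = {x \<in> topspace X. r x \<in> U}"
  have "filtered_K X (sat ` \<K>)"
    unfolding sat_def using filtered_K_saturation_image[OF \<K> s] .
  moreover have "sat G \<in> KX X"
    unfolding sat_def using saturation_image_in_KX[OF G s] .
  moreover have "openin X V"
    unfolding V_def using openin_continuous_map_preimage[OF r U(1)] .
  moreover have "V \<noteq> {}"
  proof -
    obtain u where u: "u \<in> U"
      using U(2) by blast
    then have "u \<in> topspace Y"
      using openin_subset[OF U(1)] by blast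
    then have "s u \<in> topspace X" "r (s u) = u"
      using continuous_map_image_subset_topspace[OF s] rs unfolding retraction_maps_def by blast+
    with u show ?thesis
      unfolding V_def by force
  qed
  moreover have "\<Inter>(sat ` \<K>) \<inter> sat G \<subseteq> V"
    unfolding sat_def V_def by (rule retraction_maps_Inter_saturation_subset_preimage[OF rs sat_\<K> sat_G cover])
  ultimately obtain K where K: "K \<in> \<K>" "sat K \<inter> sat G \<subseteq> V"
    using X[unfolded S_star_well_filtered_def, rule_format, of "sat ` \<K>" "sat G" V] by blast
  have K_top: "K \<subseteq> topspace Y"
    by (rule KX_subset_topspace[OF \<K>_KX[OF K(1)]])
  have "K \<inter> G \<subseteq> U"
    using K(2) unfolding sat_def V_def
    by (rule retraction_maps_Int_subset_of_saturation[OF rs K_top KX_subset_topspace[OF G]])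
  with K(1) show "\<exists>K\<in>\<K>. K \<inter> G \<subseteq> U"
    by blast
qed

lemma S_star_well_filtered_retraction_map_image:
  "\<lbrakk>retraction_map X Y r; S_star_well_filtered X\<rbrakk> \<Longrightarrow> S_star_well_filtered Y"
  unfolding retraction_map_def using S_star_well_filtered_retraction_maps_image by blast

lemma S_star_well_filtered_product_factor:
  assumes "S_star_well_filtered (product_topology X I)" "topspace (product_topology X I) \<noteq> {}"
    and "i \<in> I"
  shows "S_star_well_filtered (X i)"
proof -
  have "product_topology X I \<noteq> trivial_topology"
    using assms(2) by (simp only: null_topspace_iff_trivial not_False_eq_True)
  then have "retraction_map (product_topology X I) (X i) (\<lambda>x. x i)"
    using retraction_map_product_projection[OF assms(3), of X] by blast
  then show ?thesis
    using assms(1) by (rule S_star_well_filtered_retraction_map_image)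
qed

theorem mainTheorem16:
  shows "(\<forall>(X :: 'a topology) (Y :: 'b topology) f g.
            t0_space X \<and> t0_space Y \<and> S_star_well_filtered X \<and>
            continuous_map X Y f \<and> continuous_map Y X g \<and>
            (\<forall>y\<in>topspace Y. f (g y) = y)
            \<longrightarrow> S_star_well_filtered Y)
       \<and> (\<forall>(I :: 'i set) (Xs :: 'i \<Rightarrow> 'c topology).
            (\<forall>i\<in>I. t0_space (Xs i)) \<and> topspace (product_topology Xs I) \<noteq> {} \<and>
            S_star_well_filtered (product_topology Xs I)
            \<longrightarrow> (\<forall>i\<in>I. S_star_well_filtered (Xs i)))"
proof (intro conjI allI impI ballI)
  fix X :: "'a topology" and Y :: "'b topology" and f g
  assume "t0_space X \<and> t0_space Y \<and> S_star_well_filtered X \<and>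
            continuous_map X Y f \<and> continuous_map Y X g \<and>
            (\<forall>y\<in>topspace Y. f (g y) = y)"
  then show "S_star_well_filtered Y"
    using S_star_well_filtered_retraction_maps_image unfolding retraction_maps_def by blast
next
  fix I :: "'i set" and Xs :: "'i \<Rightarrow> 'c topology" and i
  assume "(\<forall>i\<in>I. t0_space (Xs i)) \<and> topspace (product_topology Xs I) \<noteq> {} \<and>
            S_star_well_filtered (product_topology Xs I)" and "i \<in> I"
  then show "S_star_well_filtered (Xs i)"
    using S_star_well_filtered_product_factor[of Xs I i] by blast
qed

end
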